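(* Let $a\ge1$ be an integer, let $t_{d-a},\ldots,t_d\in\mathbb{C}^*$, and let $P(Y)=\sum_{l=0}^d p_lY^l\in R[Y]$ be an $m$-triangular polynomial of degree $d$ for some integer $m\ge 1$. Then the map $\mathbb{C}^a\times\mathbb{C}^*\to\mathbb{C}^a\times\mathbb{C}^*$, $x\mapsto (t_{d-a}p_{d-a}(x),\ldots,t_dp_d(x))$, is surjective.
   Context: Fix a positive integer $a$ and variables $u_0,\ldots,u_a$. Let $R=\mathbb{C}[u_0,\ldots,u_{a-1}][u_a,u_a^{-1}]$ and $U(Y)=\sum_{j=0}^a u_jY^j\in R[Y]$. For $r\in R$ and $x=(x_0,\ldots,x_a)\in\mathbb{C}^a\times\mathbb{C}^*$, $r(x)\in\mathbb{C}$ denotes the evaluation of $r$ at $u_i=x_i$. $\mathbb{Q}_+$ denotes the positive rational numbers. For an integer $m\ge1$, a polynomial $P(Y)=\sum_{l=0}^dp_lY^l\in R[Y]$ of degree $d\ge a$ is called $m$-triangular (or $(m,U)$-triangular) if for every $l$ with $d-a\le l\le d$ one has $p_l=q_lu_a^{m-1}u_{a-d+l}+P_l(u_{a-d+l+1},\ldots,u_a)$ for some $q_l\in\mathbb{Q}_+$ and some polynomial $P_l\in\mathbb{C}[u_{a-d+l+1},\ldots,u_a]$ (for $l=d$ this means $p_d=q_du_a^m$). *)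

theory Defs
  imports Complex_Main
begin

text \<open>Points of C^a x C^* are modelled as functions x :: nat => complex, where
  x i is the value of u_i (only indices 0..a matter); the domain condition is x a ~= 0.
  Elements of R are modelled by the functions they induce on such points.\<close>

inductive_set poly_fun :: "nat set \<Rightarrow> ((nat \<Rightarrow> complex) \<Rightarrow> complex) set"
  for V :: "nat set" where
  pconst: "(\<lambda>_. c) \<in> poly_fun V"
| pvar: "i \<in> V \<Longrightarrow> (\<lambda>x. x i) \<in> poly_fun V"
| padd: "f \<in> poly_fun V \<Longrightarrow> g \<in> poly_fun V \<Longrightarrow> (\<lambda>x. f x + g x) \<in> poly_fun V"
| pmult: "f \<in> poly_fun V \<Longrightarrow> g \<in> poly_fun V \<Longrightarrow> (\<lambda>x. f x * g x) \<in> poly_fun V"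

text \<open>Functions given by elements of R = C[u_0,...,u_(a-1)][u_a, u_a^-1].\<close>
inductive_set laurent_fun :: "nat \<Rightarrow> ((nat \<Rightarrow> complex) \<Rightarrow> complex) set"
  for a :: nat where
  lconst: "(\<lambda>_. c) \<in> laurent_fun a"
| lvar: "i \<le> a \<Longrightarrow> (\<lambda>x. x i) \<in> laurent_fun a"
| linv: "(\<lambda>x. inverse (x a)) \<in> laurent_fun a"
| ladd: "f \<in> laurent_fun a \<Longrightarrow> g \<in> laurent_fun a \<Longrightarrow> (\<lambda>x. f x + g x) \<in> laurent_fun a"
| lmult: "f \<in> laurent_fun a \<Longrightarrow> g \<in> laurent_fun a \<Longrightarrow> (\<lambda>x. f x * g x) \<in> laurent_fun a"

text \<open>P(Y) = sum_l p l Y^l is a polynomial in R[Y] of degree d, given by its coefficient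
  sequence p; equalities in R are checked on the domain x a ~= 0.\<close>
definition R_poly_of_degree :: "nat \<Rightarrow> nat \<Rightarrow> (nat \<Rightarrow> (nat \<Rightarrow> complex) \<Rightarrow> complex) \<Rightarrow> bool" where
  "R_poly_of_degree a d p \<longleftrightarrow>
     (\<forall>l. p l \<in> laurent_fun a) \<and>
     (\<forall>l>d. \<forall>x. x a \<noteq> 0 \<longrightarrow> p l x = 0) \<and>
     (\<exists>x. x a \<noteq> 0 \<and> p d x \<noteq> 0)"

text \<open>(m,U)-triangular polynomial of degree d (with d >= a).  Note a-d+l = l+a-d.\<close>
definition triangular :: "nat \<Rightarrow> nat \<Rightarrow> nat \<Rightarrow> (nat \<Rightarrow> (nat \<Rightarrow> complex) \<Rightarrow> complex) \<Rightarrow> bool" where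
  "triangular a m d p \<longleftrightarrow>
     m \<ge> 1 \<and> d \<ge> a \<and> R_poly_of_degree a d p \<and>
     (\<exists>q::rat. q > 0 \<and> (\<forall>x. x a \<noteq> 0 \<longrightarrow> p d x = of_rat q * x a ^ m)) \<and>
     (\<forall>l. d - a \<le> l \<and> l < d \<longrightarrow>
        (\<exists>q::rat. q > 0 \<and> (\<exists>Pl \<in> poly_fun {l + a - d + 1..a}.
            \<forall>x. x a \<noteq> 0 \<longrightarrow> p l x = of_rat q * x a ^ (m - 1) * x (l + a - d) + Pl x)))"

end

theory Submission
  imports Defs
begin

text \<open>The system is triangular: the top coordinate t_d p_d = t_d q u_a^m only involves u_a,
  which is fixed by taking an m-th root; for l < d the coordinate t_l p_l is
  (nonzero constant, once u_a is fixed) * u_(l+a-d) + (function of u_(l+a-d+1),...,u_a),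
  so the remaining coordinates are solved one after another by back substitution.\<close>

definition depends_only_on :: "nat set \<Rightarrow> ((nat \<Rightarrow> 'a) \<Rightarrow> 'b) \<Rightarrow> bool" where
  "depends_only_on V f \<longleftrightarrow> (\<forall>x x'. (\<forall>i\<in>V. x i = x' i) \<longrightarrow> f x = f x')"

lemma depends_only_onD:
  "depends_only_on V f \<Longrightarrow> (\<And>i. i \<in> V \<Longrightarrow> x i = x' i) \<Longrightarrow> f x = f x'"
  unfolding depends_only_on_def by blast

lemma poly_fun_depends_only_on: "f \<in> poly_fun V \<Longrightarrow> depends_only_on V f"
proof -
  have "f x = f x'" if "f \<in> poly_fun V" "\<forall>i\<in>V. x i = x' i" for x x'
    using that by (induction rule: poly_fun.induct) auto
  then show "f \<in> poly_fun V \<Longrightarrow> depends_only_on V f"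
    unfolding depends_only_on_def by blast
qed

lemma depends_only_on_scale:
  "depends_only_on V f \<Longrightarrow> depends_only_on V (\<lambda>x. c * f x)"
  unfolding depends_only_on_def by fastforce

lemma complex_nth_root_exists:
  fixes w :: complex
  assumes "w \<noteq> 0" "n > 0"
  shows "\<exists>z. z ^ n = w"
proof -
  have "root n (norm w) * cis (Arg w / n) * 1 \<in> {z. z ^ n = w}"
    using bij_betw_apply[OF bij_betw_nth_root_unity[OF assms], of 1] by simp
  thus ?thesis by blast
qed

lemma back_substitution:
  fixes F :: "nat \<Rightarrow> (nat \<Rightarrow> 'a::field) \<Rightarrow> 'a"
  assumes top: "\<And>x. x a = z \<Longrightarrow> F a x = y a"
    and lower: "\<And>i. i < a \<Longrightarrow> \<exists>c G. c \<noteq> 0 \<and> depends_only_on {Suc i..a} G \<and>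
                  (\<forall>x. x a = z \<longrightarrow> F i x = c * x i + G x)"
  shows "\<exists>x. x a = z \<and> (\<forall>i>a. x i = 0) \<and> (\<forall>i\<le>a. F i x = y i)"
proof -
  have "\<exists>x. x a = z \<and> (\<forall>i>a. x i = 0) \<and> (\<forall>i. a - k \<le> i \<and> i < a \<longrightarrow> F i x = y i)"
    if "k \<le> a" for k
    using that
  proof (induction k)
    case 0
    show ?case by (intro exI[of _ "\<lambda>i. if i = a then z else 0"]) auto
  next
    case (Suc k)
    then obtain x where xa: "x a = z" and x0: "\<forall>i>a. x i = 0"
      and solved: "\<forall>i. a - k \<le> i \<and> i < a \<longrightarrow> F i x = y i" by auto
    define j where "j = a - Suc k"
    have ja: "j < a" and jk: "a - k = Suc j" using Suc.prems by (auto simp: j_def)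
    obtain c G where c: "c \<noteq> 0" and G: "depends_only_on {Suc j..a} G"
      and Fj: "\<And>x. x a = z \<Longrightarrow> F j x = c * x j + G x"
      using lower[OF ja] by blast
    define x' where "x' = x(j := (y j - G x) / c)"
    have x'a: "x' a = z" using ja xa by (simp add: x'_def)
    have "F j x' = c * ((y j - G x) / c) + G x"
      using Fj[of x', OF x'a] depends_only_onD[OF G, of x' x] by (simp add: x'_def)
    hence new: "F j x' = y j" using c by simp
    have old: "F i x' = y i" if i: "Suc j \<le> i" "i < a" for i
    proof -
      obtain c' G' where G': "depends_only_on {Suc i..a} G'"
        and Fi: "\<And>x. x a = z \<Longrightarrow> F i x = c' * x i + G' x"
        using lower[OF i(2)] by blast
      have "G' x' = G' x" using i by (intro depends_only_onD[OF G']) (auto simp: x'_def)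
      moreover have "x' i = x i" using i by (simp add: x'_def)
      ultimately have "F i x' = F i x" using Fi[of x', OF x'a] Fi[of x, OF xa] by simp
      with solved i jk show ?thesis by simp
    qed
    have "F i x' = y i" if "j \<le> i" "i < a" for i
      using that new old by (cases "i = j") auto
    hence "\<forall>i. a - Suc k \<le> i \<and> i < a \<longrightarrow> F i x' = y i" by (simp add: j_def)
    moreover have "\<forall>i>a. x' i = 0" using x0 ja by (simp add: x'_def)
    ultimately show ?case using x'a by blast
  qed
  from this[of a] obtain x where "x a = z" "\<forall>i>a. x i = 0" "\<forall>i<a. F i x = y i"
    by auto
  moreover have "F a x = y a" using top \<open>x a = z\<close> .
  ultimately show ?thesis by (auto simp: le_less)
qed

lemma triangular_lowerE:
  assumes "triangular a m d p" "i < a"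
  obtains q :: rat and P where "q > 0" "P \<in> poly_fun {Suc i..a}"
    "\<And>x. x a \<noteq> 0 \<Longrightarrow> p (d - a + i) x = of_rat q * x a ^ (m - 1) * x i + P x"
proof -
  have da: "d \<ge> a" and low: "\<And>l. d - a \<le> l \<Longrightarrow> l < d \<Longrightarrow>
        (\<exists>q::rat. q > 0 \<and> (\<exists>Pl \<in> poly_fun {l + a - d + 1..a}.
            \<forall>x. x a \<noteq> 0 \<longrightarrow> p l x = of_rat q * x a ^ (m - 1) * x (l + a - d) + Pl x))"
    using assms(1) unfolding triangular_def by auto
  have "d - a \<le> d - a + i" "d - a + i < d" "d - a + i + a - d + 1 = Suc i"
    using da assms(2) by auto
  with low that show ?thesis by fastforce
qed

lemma triangular_top_solvable:
  assumes "triangular a m d p" "c \<noteq> 0" "w \<noteq> 0"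
  shows "\<exists>z. z \<noteq> 0 \<and> (\<forall>x. x a = z \<longrightarrow> c * p d x = w)"
proof -
  have m: "m \<ge> 1" and "\<exists>q::rat. q > 0 \<and> (\<forall>x. x a \<noteq> 0 \<longrightarrow> p d x = of_rat q * x a ^ m)"
    using assms(1) unfolding triangular_def by auto
  then obtain q :: rat where q: "q > 0" and pd: "\<And>x. x a \<noteq> 0 \<Longrightarrow> p d x = of_rat q * x a ^ m"
    by blast
  have cq: "c * of_rat q \<noteq> 0" using q assms(2) by simp
  obtain z where z: "z ^ m = w / (c * of_rat q)"
    using complex_nth_root_exists[of "w / (c * of_rat q)" m] cq assms(3) m by auto
  have "z \<noteq> 0" using z cq assms(3) m by (cases m) auto
  moreover have "c * p d x = w" if "x a = z" for x
    using pd[of x] that z cq \<open>z \<noteq> 0\<close> by simp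
  ultimately show ?thesis by blast
qed

lemma triangular_lower_solvable:
  assumes "triangular a m d p" "c \<noteq> 0" "z \<noteq> 0" "i < a"
  shows "\<exists>c' G. c' \<noteq> 0 \<and> depends_only_on {Suc i..a} G \<and>
           (\<forall>x. x a = z \<longrightarrow> c * p (d - a + i) x = c' * x i + G x)"
proof -
  obtain q :: rat and P where q: "q > 0" and P: "P \<in> poly_fun {Suc i..a}"
    and pl: "\<And>x. x a \<noteq> 0 \<Longrightarrow> p (d - a + i) x = of_rat q * x a ^ (m - 1) * x i + P x"
    using triangular_lowerE[OF assms(1,4)] by blast
  show ?thesis
  proof (intro exI conjI allI impI)
    show "c * of_rat q * z ^ (m - 1) \<noteq> 0" using assms(2,3) q by simp
    show "depends_only_on {Suc i..a} (\<lambda>x. c * P x)"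
      by (intro depends_only_on_scale poly_fun_depends_only_on P)
    show "c * p (d - a + i) x = c * of_rat q * z ^ (m - 1) * x i + c * P x" if "x a = z" for x
      using pl[of x] that assms(3) by (simp add: algebra_simps)
  qed
qed

theorem mainTheorem2:
  fixes a m d :: nat
    and p :: "nat \<Rightarrow> (nat \<Rightarrow> complex) \<Rightarrow> complex"
    and t :: "nat \<Rightarrow> complex"
  assumes "a \<ge> 1"
    and "triangular a m d p"
    and "\<forall>l. d - a \<le> l \<and> l \<le> d \<longrightarrow> t l \<noteq> 0"
  shows "\<forall>y :: nat \<Rightarrow> complex. y a \<noteq> 0 \<longrightarrow>
           (\<exists>x :: nat \<Rightarrow> complex. x a \<noteq> 0 \<and> (\<forall>i>a. x i = 0) \<and>
              (\<forall>i\<le>a. t (d - a + i) * p (d - a + i) x = y i))"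
proof (intro allI impI)
  fix y :: "nat \<Rightarrow> complex" assume "y a \<noteq> 0"
  have da: "d - a + a = d" using assms(2) unfolding triangular_def by simp
  have t: "t (d - a + i) \<noteq> 0" if "i \<le> a" for i
  proof -
    have "d - a + i \<le> d" using da that by linarith
    with assms(3) show ?thesis by (meson le_add1)
  qed
  obtain z where "z \<noteq> 0" and top: "\<forall>x. x a = z \<longrightarrow> t (d - a + a) * p (d - a + a) x = y a"
    using triangular_top_solvable[OF assms(2) t[of a] \<open>y a \<noteq> 0\<close>] da by auto
  have "\<exists>x. x a = z \<and> (\<forall>i>a. x i = 0) \<and> (\<forall>i\<le>a. t (d - a + i) * p (d - a + i) x = y i)"
    by (rule back_substitution[where F = "\<lambda>i x. t (d - a + i) * p (d - a + i) x"])
      (use top triangular_lower_solvable[OF assms(2) t \<open>z \<noteq> 0\<close>] in auto)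
  with \<open>z \<noteq> 0\<close> show "\<exists>x. x a \<noteq> 0 \<and> (\<forall>i>a. x i = 0) \<and>
                         (\<forall>i\<le>a. t (d - a + i) * p (d - a + i) x = y i)" by blast
qed

end
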